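(* Let ${\bf A}=(a(i,j))_{1\le i,j\le n}$ be a real $n\times n$ matrix with no zero row, and suppose $$\min\Big(\min_{1\le i\le n}\#\{j:\ a(i,j)\ne 0\},\ \min_{1\le i\le n}\#\{j:\ a(j,i)\ne 0\}\Big)>n/2.$$ Then the matrix ${\bf A}_{\rm sde}$ associated with ${\bf A}$ (defined below) has $1$ as a simple eigenvalue, and all of its other eigenvalues lie in the open unit disk $\{z\in\mathbb{C}:|z|<1\}$.
   Context: For a real number $t$, $t_+=\max(t,0)$. Define $w_i=\big(\sum_{j=1}^n |a(i,j)|\big)^{-1}$, $\tilde a(i,j)=w_i\,a(i,j)$, $\tilde{\bf A}_+=\big((\tilde a(i,j))_+\big)_{i,j}$, $\tilde{\bf A}_-=\big((-\tilde a(i,j))_+\big)_{i,j}$, and $${\bf A}_{\rm sde}=\begin{pmatrix}\tilde{\bf A}_+ & \tilde{\bf A}_-\\ \tilde{\bf A}_+ & \tilde{\bf A}_-\end{pmatrix}\in\mathbb{R}^{2n\times 2n}.$$ *)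

theory Defs
  imports "Jordan_Normal_Form.Char_Poly"
begin

definition sde_w :: "real mat \<Rightarrow> nat \<Rightarrow> real" where
  "sde_w A i = inverse (\<Sum>j<dim_col A. \<bar>A $$ (i,j)\<bar>)"

definition sde_tilde :: "real mat \<Rightarrow> real mat" where
  "sde_tilde A = mat (dim_row A) (dim_col A) (\<lambda>(i,j). sde_w A i * A $$ (i,j))"

definition sde_plus :: "real mat \<Rightarrow> real mat" where
  "sde_plus A = mat (dim_row A) (dim_col A) (\<lambda>(i,j). max (sde_tilde A $$ (i,j)) 0)"

definition sde_minus :: "real mat \<Rightarrow> real mat" where
  "sde_minus A = mat (dim_row A) (dim_col A) (\<lambda>(i,j). max (- (sde_tilde A $$ (i,j))) 0)"

definition A_sde :: "real mat \<Rightarrow> real mat" where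
  "A_sde A = four_block_mat (sde_plus A) (sde_minus A) (sde_plus A) (sde_minus A)"

definition alg_mult :: "complex mat \<Rightarrow> complex \<Rightarrow> nat" where
  "alg_mult M z = order z (char_poly M)"

end

(*
  Write A_sde = [[P, Q], [P, Q]], where P and Q are the positive and negative parts of the
  row-normalised matrix A~.  Then B = P + Q = (w_i |a(i,j)|) is row stochastic because no row of
  A vanishes, and the density hypothesis makes the support of every row of A meet the support of
  every column, so B^2 is entrywise positive.

  Since the two block rows of A_sde coincide, an eigenvector for z /= 0 has the form (w, w) with
  B w = z w.  If |z| >= 1, then w is an eigenvector of the positive stochastic matrix B^2 for z^2;
  at a coordinate of maximal modulus, strict convexity of the disc forces w to be constant, and
  then z = 1.

  Finally A_sde is itself row stochastic, and the maximum principle rules out a vector x with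
  (A_sde - I) x = c 1 for c /= 0.  Hence the eigenvalue 1 has no Jordan block of size 2; as its
  eigenspace consists of the constant vectors, it is algebraically simple.
*)

theory Submission
  imports
    Defs
    "Jordan_Normal_Form.Jordan_Normal_Form_Uniqueness"
    "Jordan_Normal_Form.Jordan_Normal_Form_Existence"
begin

lemma weighted_variance:
  fixes c a :: "'i \<Rightarrow> real"
  assumes "sum c I = 1" and "(\<Sum>j\<in>I. c j * a j) = m"
  shows "(\<Sum>j\<in>I. c j * (a j - m)\<^sup>2) = (\<Sum>j\<in>I. c j * (a j)\<^sup>2) - m\<^sup>2"
proof -
  have pointwise: "c j * (a j - m)\<^sup>2 = c j * (a j)\<^sup>2 - 2 * m * (c j * a j) + m\<^sup>2 * c j" for j
    by (simp add: power2_diff algebra_simps)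
  have "(\<Sum>j\<in>I. c j * (a j - m)\<^sup>2)
      = (\<Sum>j\<in>I. c j * (a j)\<^sup>2) - 2 * m * (\<Sum>j\<in>I. c j * a j) + m\<^sup>2 * sum c I"
    by (simp only: pointwise sum.distrib sum_subtractf sum_distrib_left)
  then show ?thesis
    using assms by (simp add: power2_eq_square)
qed

lemma convex_combination_eq_if_norm_ge:
  fixes I :: "'i set" and c :: "'i \<Rightarrow> real" and u :: "'i \<Rightarrow> complex"
  defines "d \<equiv> \<Sum>j\<in>I. of_real (c j) * u j"
  assumes "finite I" and "\<forall>j\<in>I. 0 < c j" and "sum c I = 1"
    and "\<forall>j\<in>I. cmod (u j) \<le> r" and "r \<le> cmod d"
  shows "\<forall>j\<in>I. u j = d"
proof -
  have "(\<Sum>j\<in>I. c j * Re (u j)) = Re d" "(\<Sum>j\<in>I. c j * Im (u j)) = Im d"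
    by (simp_all add: d_def)
  then have "(\<Sum>j\<in>I. c j * (cmod (u j - d))\<^sup>2) = (\<Sum>j\<in>I. c j * (cmod (u j))\<^sup>2) - (cmod d)\<^sup>2"
    using weighted_variance[of c I "\<lambda>j. Re (u j)"] weighted_variance[of c I "\<lambda>j. Im (u j)"] assms(4)
    unfolding cmod_power2 by (simp add: distrib_left sum.distrib)
  also have "\<dots> \<le> (\<Sum>j\<in>I. c j * r\<^sup>2) - r\<^sup>2"
  proof -
    have "(\<Sum>j\<in>I. c j * (cmod (u j))\<^sup>2) \<le> (\<Sum>j\<in>I. c j * r\<^sup>2)"
      using assms(3,5) by (intro sum_mono mult_left_mono power_mono) auto
    moreover have "r\<^sup>2 \<le> (cmod d)\<^sup>2"
    proof -
      obtain j where "j \<in> I"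
        using assms(4) by fastforce
      then have "0 \<le> r"
        using assms(5) norm_ge_zero order_trans by blast
      then show ?thesis
        using assms(6) by (simp add: power_mono)
    qed
    ultimately show ?thesis by linarith
  qed
  also have "\<dots> = 0"
    using assms(4) by (simp add: sum_distrib_right[symmetric])
  finally have "(\<Sum>j\<in>I. c j * (cmod (u j - d))\<^sup>2) = 0"
    using assms(3) by (meson antisym less_imp_le mult_nonneg_nonneg sum_nonneg zero_le_power2)
  then have terms: "\<forall>j\<in>I. c j * (cmod (u j - d))\<^sup>2 = 0"
    using assms(2,3) by (subst (asm) sum_nonneg_eq_0_iff) auto
  show ?thesis
  proof
    fix j
    assume "j \<in> I"
    then have "c j \<noteq> 0" and "c j * (cmod (u j - d))\<^sup>2 = 0"
      using assms(3) terms by auto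
    then show "u j = d"
      by simp
  qed
qed

lemma stochastic_shift_eq_0:
  fixes c :: "'i \<Rightarrow> 'i \<Rightarrow> real" and x :: "'i \<Rightarrow> real"
  assumes "finite I" and "I \<noteq> {}"
    and nonneg: "\<forall>i\<in>I. \<forall>j\<in>I. 0 \<le> c i j" and rows: "\<forall>i\<in>I. sum (c i) I = 1"
    and shift: "\<forall>i\<in>I. (\<Sum>j\<in>I. c i j * x j) = x i + g"
  shows "g = 0"
proof -
  have "h \<le> 0" if "\<forall>i\<in>I. (\<Sum>j\<in>I. c i j * y j) = y i + h" for y h
  proof -
    obtain k where k: "k \<in> I" "Max (y ` I) = y k"
      using obtains_MAX[OF assms(1,2), of y] by blast
    have k_max: "y j \<le> y k" if "j \<in> I" for j
      using Max_ge[of "y ` I" "y j"] k that assms(1) by simp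
    have "y k + h = (\<Sum>j\<in>I. c k j * y j)"
      using that k by simp
    also have "\<dots> \<le> (\<Sum>j\<in>I. c k j * y k)"
      using k_max k nonneg by (intro sum_mono mult_left_mono) auto
    also have "\<dots> = y k"
      using rows k by (simp add: sum_distrib_right[symmetric])
    finally show ?thesis by simp
  qed
  from this[of x g] this[of "\<lambda>j. - x j" "- g"] show ?thesis
    using shift by (simp add: sum_negf)
qed

definition row_stochastic :: "real mat \<Rightarrow> bool" where
  "row_stochastic M \<longleftrightarrow>
     (\<forall>i<dim_row M. \<forall>j<dim_col M. 0 \<le> M $$ (i,j)) \<and>
     (\<forall>i<dim_row M. (\<Sum>j<dim_col M. M $$ (i,j)) = 1)"

lemma row_scalar_prod_sum:
  assumes "v \<in> carrier_vec (dim_col M)" and "i < dim_row M"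
  shows "row M i \<bullet> v = (\<Sum>j<dim_col M. M $$ (i,j) * v $ j)"
  using assms by (simp add: scalar_prod_def lessThan_atLeast0)

lemma row_stochastic_iff_mult_ones:
  assumes "M \<in> carrier_mat n m"
  shows "row_stochastic M \<longleftrightarrow>
    (\<forall>i<n. \<forall>j<m. 0 \<le> M $$ (i,j)) \<and> M *\<^sub>v vec m (\<lambda>_. 1) = vec n (\<lambda>_. 1)"
  using assms by (auto simp: row_stochastic_def vec_eq_iff row_scalar_prod_sum)

lemma row_stochastic_mult_const:
  assumes "M \<in> carrier_mat n m" and "row_stochastic M"
  shows "map_mat complex_of_real M *\<^sub>v vec m (\<lambda>_. c) = vec n (\<lambda>_. c)"
proof (rule eq_vecI)
  fix i assume "i < dim_vec (vec n (\<lambda>_. c))"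
  then have i: "i < n" by simp
  have "(map_mat complex_of_real M *\<^sub>v vec m (\<lambda>_. c)) $ i = of_real (\<Sum>j<m. M $$ (i,j)) * c"
    using assms(1) i by (simp add: row_scalar_prod_sum sum_distrib_right)
  also have "\<dots> = c"
    using assms i unfolding row_stochastic_def by simp
  finally show "(map_mat complex_of_real M *\<^sub>v vec m (\<lambda>_. c)) $ i = vec n (\<lambda>_. c) $ i"
    using i by simp
qed (use assms(1) in simp)

lemma row_stochastic_mult:
  assumes A: "A \<in> carrier_mat n m" "row_stochastic A" and B: "B \<in> carrier_mat m k" "row_stochastic B"
  shows "row_stochastic (A * B)"
proof -
  have "0 \<le> (A * B) $$ (i,j)" if "i < n" "j < k" for i j
    using A B that by (auto simp: row_stochastic_def scalar_prod_def intro!: sum_nonneg)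
  moreover have "(A * B) *\<^sub>v vec k (\<lambda>_. 1) = vec n (\<lambda>_. 1)"
    using A B by (simp add: row_stochastic_iff_mult_ones)
  ultimately show ?thesis
    using row_stochastic_iff_mult_ones[OF mult_carrier_mat[OF A(1) B(1)]] by blast
qed

definition peripheral_eigenvectors_constant :: "real mat \<Rightarrow> bool" where
  "peripheral_eigenvectors_constant M \<longleftrightarrow>
     (\<forall>v z. eigenvector (map_mat complex_of_real M) v z \<and> 1 \<le> cmod z
        \<longrightarrow> z = 1 \<and> (\<exists>c. v = vec (dim_row M) (\<lambda>_. c)))"

lemma positive_stochastic_peripheral_eigenvectors_constant:
  assumes M: "M \<in> carrier_mat n n" "row_stochastic M"
    and pos: "\<forall>i<n. \<forall>j<n. 0 < M $$ (i,j)"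
  shows "peripheral_eigenvectors_constant M"
  unfolding peripheral_eigenvectors_constant_def
proof (intro allI impI, elim conjE)
  fix v z
  assume ev: "eigenvector (map_mat complex_of_real M) v z" and z: "1 \<le> cmod z"
  then have v: "v \<in> carrier_vec n" "v \<noteq> 0\<^sub>v n"
    and Mv: "map_mat complex_of_real M *\<^sub>v v = z \<cdot>\<^sub>v v"
    using M(1) unfolding eigenvector_def by auto
  obtain i where i: "i < n" "v $ i \<noteq> 0"
    using v by (auto simp: vec_eq_iff)
  obtain k where k: "k < n" "Max ((\<lambda>j. cmod (v $ j)) ` {..<n}) = cmod (v $ k)"
    using obtains_MAX[of "{..<n}" "\<lambda>j. cmod (v $ j)"] i by blast
  then have k_max: "\<forall>j<n. cmod (v $ j) \<le> cmod (v $ k)"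
    using Max_ge[of "(\<lambda>j. cmod (v $ j)) ` {..<n}"] by simp
  define d where "d = z * v $ k"
  have d_sum: "d = (\<Sum>j<n. of_real (M $$ (k,j)) * v $ j)"
    using arg_cong[OF Mv, of "\<lambda>w. w $ k"] M(1) v k by (simp add: d_def row_scalar_prod_sum)
  have "cmod (v $ k) \<le> cmod d"
    using z by (simp add: d_def norm_mult mult_le_cancel_right1)
  then have const: "\<forall>j\<in>{..<n}. v $ j = d"
    unfolding d_sum
    by (intro convex_combination_eq_if_norm_ge[where r = "cmod (v $ k)"])
      (use M pos k k_max d_sum in \<open>auto simp: row_stochastic_def\<close>)
  then have "v $ k = d" "v $ k \<noteq> 0"
    using i k by auto
  then have "z = 1"
    unfolding d_def by (metis mult_cancel_right2)
  moreover have "v = vec (dim_row M) (\<lambda>_. d)"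
    using const v M(1) by auto
  ultimately show "z = 1 \<and> (\<exists>c. v = vec (dim_row M) (\<lambda>_. c))"
    by blast
qed

lemma primitive_stochastic_peripheral_eigenvectors_constant:
  assumes M: "M \<in> carrier_mat n n" "row_stochastic M"
    and pos: "\<forall>i<n. \<forall>j<n. 0 < (M * M) $$ (i,j)"
  shows "peripheral_eigenvectors_constant M"
  unfolding peripheral_eigenvectors_constant_def
proof (intro allI impI, elim conjE)
  fix v z
  let ?M = "map_mat complex_of_real M"
  assume ev: "eigenvector ?M v z" and z: "1 \<le> cmod z"
  then have v: "v \<in> carrier_vec n" "v \<noteq> 0\<^sub>v n" and Mv: "?M *\<^sub>v v = z \<cdot>\<^sub>v v"
    using M(1) unfolding eigenvector_def by auto
  have "map_mat complex_of_real (M * M) *\<^sub>v v = z\<^sup>2 \<cdot>\<^sub>v v"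
    using M(1) v Mv by (simp add: of_real_hom.mat_hom_mult mult_mat_vec smult_smult_assoc power2_eq_square)
  then have "eigenvector (map_mat complex_of_real (M * M)) v (z\<^sup>2)"
    using M(1) v unfolding eigenvector_def by simp
  moreover have "peripheral_eigenvectors_constant (M * M)"
    using M pos by (intro positive_stochastic_peripheral_eigenvectors_constant) (auto intro: row_stochastic_mult)
  moreover have "1 \<le> cmod (z\<^sup>2)"
    using z by (simp add: norm_power)
  ultimately obtain c where c: "v = vec n (\<lambda>_. c)"
    using M(1) unfolding peripheral_eigenvectors_constant_def by auto
  then have "z \<cdot>\<^sub>v v = v"
    using Mv row_stochastic_mult_const[OF M] by simp
  moreover have "0 < n" "c \<noteq> 0"
    using v(2) c by (auto simp: vec_eq_iff)
  ultimately have "z = 1"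
    using c by (auto simp: vec_eq_iff)
  with c show "z = 1 \<and> (\<exists>c. v = vec (dim_row M) (\<lambda>_. c))"
    using M(1) by auto
qed

lemma twin_block_row_stochastic:
  assumes P: "P \<in> carrier_mat n n" and Q: "Q \<in> carrier_mat n n"
    and nonneg: "\<forall>i<n. \<forall>j<n. 0 \<le> P $$ (i,j) \<and> 0 \<le> Q $$ (i,j)"
    and "row_stochastic (P + Q)"
  shows "row_stochastic (four_block_mat P Q P Q)"
proof -
  let ?one = "\<lambda>k. vec k (\<lambda>_. 1 :: real)"
  have "(P + Q) *\<^sub>v ?one n = ?one n"
    using row_stochastic_iff_mult_ones[OF add_carrier_mat[OF Q]] assms(4) by blast
  then have PQ: "P *\<^sub>v ?one n + Q *\<^sub>v ?one n = ?one n"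
    using P Q by (simp add: add_mult_distrib_mat_vec)
  have "?one (n + n) = ?one n @\<^sub>v ?one n"
    by (auto simp: vec_eq_iff)
  then have "four_block_mat P Q P Q *\<^sub>v ?one (n + n) = ?one (n + n)"
    using P Q PQ by (simp add: four_block_mat_mult_vec)
  moreover have "0 \<le> four_block_mat P Q P Q $$ (i,j)" if "i < n + n" "j < n + n" for i j
    using P Q nonneg that by auto
  moreover have "four_block_mat P Q P Q \<in> carrier_mat (n + n) (n + n)"
    using P Q by simp
  ultimately show ?thesis
    using row_stochastic_iff_mult_ones by blast
qed

lemma twin_block_eigenvector:
  fixes P Q :: "'a::field mat"
  assumes P: "P \<in> carrier_mat n n" and Q: "Q \<in> carrier_mat n n"
    and ev: "eigenvector (four_block_mat P Q P Q) v z" and "z \<noteq> 0"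
  shows "\<exists>w. v = w @\<^sub>v w \<and> eigenvector (P + Q) w z"
proof -
  define w1 w2 where "w1 = vec_first v n" and "w2 = vec_last v n"
  have v: "v \<in> carrier_vec (n + n)" "v \<noteq> 0\<^sub>v (n + n)"
    and Sv: "four_block_mat P Q P Q *\<^sub>v v = z \<cdot>\<^sub>v v"
    using ev P Q unfolding eigenvector_def by auto
  have w: "w1 \<in> carrier_vec n" "w2 \<in> carrier_vec n" and v_split: "v = w1 @\<^sub>v w2"
    using v(1) by (auto simp: w1_def w2_def)
  let ?u = "P *\<^sub>v w1 + Q *\<^sub>v w2"
  have "?u @\<^sub>v ?u = four_block_mat P Q P Q *\<^sub>v v"
    unfolding v_split by (rule four_block_mat_mult_vec[OF P Q P Q w, symmetric])
  also have "\<dots> = z \<cdot>\<^sub>v v"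
    by (rule Sv)
  also have "\<dots> = (z \<cdot>\<^sub>v w1) @\<^sub>v (z \<cdot>\<^sub>v w2)"
    unfolding v_split using w by (intro eq_vecI) auto
  finally have "?u = z \<cdot>\<^sub>v w1 \<and> ?u = z \<cdot>\<^sub>v w2"
    by (subst (asm) append_vec_eq) (use P Q w in auto)
  then have top: "?u = z \<cdot>\<^sub>v w1" and "z \<cdot>\<^sub>v w1 = z \<cdot>\<^sub>v w2"
    by metis+
  then have "w2 = w1"
    using w \<open>z \<noteq> 0\<close> by (intro eq_vecI) (auto simp: vec_eq_iff)
  have "eigenvector (P + Q) w1 z"
  proof -
    have "(P + Q) *\<^sub>v w1 = z \<cdot>\<^sub>v w1"
      using top P Q w unfolding \<open>w2 = w1\<close> by (simp add: add_mult_distrib_mat_vec)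
    moreover have "w1 \<noteq> 0\<^sub>v n"
    proof
      assume "w1 = 0\<^sub>v n"
      then have "v = 0\<^sub>v (n + n)"
        unfolding v_split \<open>w2 = w1\<close> by (auto simp: vec_eq_iff)
      with v(2) show False ..
    qed
    ultimately show ?thesis
      using P Q w unfolding eigenvector_def by simp
  qed
  then show ?thesis
    using v_split unfolding \<open>w2 = w1\<close> by blast
qed

lemma twin_block_peripheral_eigenvectors_constant:
  assumes P: "P \<in> carrier_mat n n" and Q: "Q \<in> carrier_mat n n"
    and "peripheral_eigenvectors_constant (P + Q)"
  shows "peripheral_eigenvectors_constant (four_block_mat P Q P Q)"
  unfolding peripheral_eigenvectors_constant_def
proof (intro allI impI, elim conjE)
  fix v z
  let ?f = "map_mat complex_of_real"
  assume ev: "eigenvector (?f (four_block_mat P Q P Q)) v z" and z: "1 \<le> cmod z"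
  have "?f (four_block_mat P Q P Q) = four_block_mat (?f P) (?f Q) (?f P) (?f Q)"
    using P Q by (simp add: map_four_block_mat)
  moreover have "z \<noteq> 0"
    using z by auto
  ultimately obtain w where v: "v = w @\<^sub>v w" and "eigenvector (?f P + ?f Q) w z"
    using twin_block_eigenvector[of "?f P" n "?f Q"] ev P Q by auto
  moreover have "?f P + ?f Q = ?f (P + Q)"
    using P Q by (intro eq_matI) auto
  ultimately have "eigenvector (?f (P + Q)) w z"
    by simp
  then obtain c where "z = 1" "w = vec n (\<lambda>_. c)"
    using assms(3) z Q unfolding peripheral_eigenvectors_constant_def by auto
  moreover have "vec n (\<lambda>_. c) @\<^sub>v vec n (\<lambda>_. c) = vec (n + n) (\<lambda>_. c)"
    by (auto simp: vec_eq_iff)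
  ultimately show "z = 1 \<and> (\<exists>c. v = vec (dim_row (four_block_mat P Q P Q)) (\<lambda>_. c))"
    using P Q v by auto
qed

lemma kernel_dim_le_1:
  fixes K :: "'a::field mat"
  assumes K: "K \<in> carrier_mat n n" and u: "u \<in> mat_kernel K"
    and multiples: "\<And>x. x \<in> mat_kernel K \<Longrightarrow> \<exists>c. x = c \<cdot>\<^sub>v u"
  shows "kernel_dim K \<le> 1"
proof -
  interpret kernel n n K
    using K by unfold_locales
  have "Ker.span {u} = mat_kernel K"
  proof
    show "Ker.span {u} \<subseteq> mat_kernel K"
      using u Ker.span_closed[of "{u}"] by blast
    have "c \<cdot>\<^sub>v u \<in> Ker.span {u}" for c
      using u Ker.span_self[of u] submodule.smult_closed[OF Ker.span_is_submodule[of "{u}"]]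
      by auto
    then show "mat_kernel K \<subseteq> Ker.span {u}"
      using multiples by blast
  qed
  then show ?thesis
    using Ker.dim_le1I[of u] u by simp
qed

lemma alg_mult_le_1:
  assumes A: "A \<in> carrier_mat n n" and dim: "dim_gen_eigenspace A e 2 \<le> 1"
  shows "alg_mult A e \<le> 1"
proof -
  obtain as where "char_poly A = (\<Prod>a\<leftarrow>as. [:- a, 1:])"
    using char_poly_factorized[OF A] by blast
  then obtain n_as where jnf: "jordan_nf A n_as"
    using jordan_nf_exists[OF A] by blast
  define sizes where "sizes = map fst [(k, e')\<leftarrow>n_as. e' = e]"
  \<comment> \<open>a Jordan block of size k for e contributes min 2 k to dim ker (A - e I)^2\<close>
  have "filter (\<lambda>na. snd na = e) n_as = [(k, e')\<leftarrow>n_as. e' = e]"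
    by (rule filter_cong) auto
  then have order_sizes: "alg_mult A e = sum_list sizes"
    unfolding alg_mult_def jordan_nf_order[OF jnf] sizes_def by simp
  have "sum_list (map (min 2) sizes) \<le> 1"
    using dim unfolding dim_gen_eigenspace[OF jnf] sizes_def by simp
  then have "min 2 k \<le> 1" if "k \<in> set sizes" for k
    using member_le_sum_list[of "min 2 k" "map (min 2) sizes"] that by fastforce
  then have "map (min 2) sizes = sizes"
    by (intro map_idI) fastforce
  with \<open>sum_list (map (min 2) sizes) \<le> 1\<close> show ?thesis
    unfolding order_sizes by simp
qed

lemma row_stochastic_shift_eq_0:
  assumes S: "S \<in> carrier_mat n n" "0 < n" "row_stochastic S"
    and shift: "\<And>i. i < n \<Longrightarrow> (\<Sum>j<n. of_real (S $$ (i,j)) * x $ j) = x $ i + (g :: complex)"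
  shows "g = 0"
proof -
  have stoch: "\<forall>i\<in>{..<n}. \<forall>j\<in>{..<n}. 0 \<le> S $$ (i,j)" "\<forall>i\<in>{..<n}. (\<Sum>j<n. S $$ (i,j)) = 1"
    using S unfolding row_stochastic_def by auto
  have "(\<Sum>j<n. S $$ (i,j) * Re (x $ j)) = Re (x $ i) + Re g"
    and "(\<Sum>j<n. S $$ (i,j) * Im (x $ j)) = Im (x $ i) + Im g" if "i < n" for i
    using arg_cong[OF shift[OF that], of Re] arg_cong[OF shift[OF that], of Im] by simp_all
  then have "Re g = 0" "Im g = 0"
    using stochastic_shift_eq_0[of "{..<n}" "\<lambda>i j. S $$ (i,j)" "\<lambda>j. Re (x $ j)" "Re g"]
      stochastic_shift_eq_0[of "{..<n}" "\<lambda>i j. S $$ (i,j)" "\<lambda>j. Im (x $ j)" "Im g"]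
      stoch S(2) by auto
  then show ?thesis
    by (simp add: complex_eq_iff)
qed

lemma row_stochastic_gen_eigenvectors_constant:
  fixes S :: "real mat"
  defines "C \<equiv> char_matrix (map_mat complex_of_real S) 1"
  assumes S: "S \<in> carrier_mat n n" "0 < n" "row_stochastic S"
    and fixed_const: "\<And>v. eigenvector (map_mat complex_of_real S) v 1 \<Longrightarrow> \<exists>c. v = vec n (\<lambda>_. c)"
    and x: "x \<in> mat_kernel (C ^\<^sub>m 2)"
  shows "\<exists>c. x = vec n (\<lambda>_. c)"
proof -
  have C: "C \<in> carrier_mat n n"
    using S(1) by (simp add: C_def)
  have C_nth: "(C *\<^sub>v y) $ i = (\<Sum>j<n. of_real (S $$ (i,j)) * y $ j) - y $ i"
    if "y \<in> carrier_vec n" "i < n" for y i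
    using S(1) that by (simp add: C_def char_matrix_def add_mult_distrib_mat_vec row_scalar_prod_sum)
  have kernel_const: "\<exists>c. y = vec n (\<lambda>_. c)" if "y \<in> carrier_vec n" "C *\<^sub>v y = 0\<^sub>v n" for y
  proof (cases "y = 0\<^sub>v n")
    case True
    then show ?thesis
      by (auto simp: vec_eq_iff)
  next
    case False
    then show ?thesis
      using that fixed_const eigenvector_char_matrix[of _ n y 1] S(1) C_def by auto
  qed
  have "C ^\<^sub>m 2 = C * C"
    using C by (simp add: numeral_2_eq_2)
  moreover have "C ^\<^sub>m 2 \<in> carrier_mat n n"
    using C by simp
  ultimately have xc: "x \<in> carrier_vec n" and "C *\<^sub>v (C *\<^sub>v x) = 0\<^sub>v n"
    using mat_kernelD[of "C ^\<^sub>m 2" n n x] x C by auto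
  then obtain g where g: "C *\<^sub>v x = vec n (\<lambda>_. g)"
    using kernel_const[of "C *\<^sub>v x"] C by auto
  have "(\<Sum>j<n. of_real (S $$ (i,j)) * x $ j) = x $ i + g" if "i < n" for i
    using arg_cong[OF g, of "\<lambda>y. y $ i"] C_nth[OF xc that] that by (simp add: diff_eq_eq add.commute)
  then have "g = 0"
    by (rule row_stochastic_shift_eq_0[OF S])
  then have "C *\<^sub>v x = 0\<^sub>v n"
    using g by (auto simp: vec_eq_iff)
  then show ?thesis
    using kernel_const xc by blast
qed

lemma alg_mult_pos_if_eigenvalue:
  assumes A: "A \<in> carrier_mat n n" and "eigenvalue A e"
  shows "0 < alg_mult A e"
proof -
  have "poly (char_poly A) e = 0"
    using assms eigenvalue_root_char_poly[OF A] by blast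
  moreover have "char_poly A \<noteq> 0"
    using degree_monic_char_poly[OF A] by auto
  ultimately show ?thesis
    unfolding alg_mult_def using order_root by blast
qed

lemma row_stochastic_eigenvector_ones:
  assumes "S \<in> carrier_mat n n" and "0 < n" and "row_stochastic S"
  shows "eigenvector (map_mat complex_of_real S) (vec n (\<lambda>_. 1)) 1"
  using assms row_stochastic_mult_const[of S n n 1]
  unfolding eigenvector_def by (auto simp: vec_eq_iff)

lemma row_stochastic_dim_gen_eigenspace_le_1:
  fixes S :: "real mat"
  defines "S' \<equiv> map_mat complex_of_real S"
  assumes S: "S \<in> carrier_mat n n" "0 < n" "row_stochastic S"
    and fixed_const: "\<And>v. eigenvector S' v 1 \<Longrightarrow> \<exists>c. v = vec n (\<lambda>_. c)"
  shows "dim_gen_eigenspace S' 1 2 \<le> 1"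
proof -
  define ones where "ones = vec n (\<lambda>_. 1 :: complex)"
  have S': "S' \<in> carrier_mat n n"
    using S by (simp add: S'_def)
  have C: "char_matrix S' 1 \<in> carrier_mat n n" and C2: "char_matrix S' 1 ^\<^sub>m 2 \<in> carrier_mat n n"
    using S' by simp_all
  have ones_kernel: "ones \<in> mat_kernel (char_matrix S' 1 ^\<^sub>m 2)"
  proof -
    have "char_matrix S' 1 *\<^sub>v ones = 0\<^sub>v n"
      using row_stochastic_eigenvector_ones[OF S] eigenvector_char_matrix[OF S']
      unfolding S'_def ones_def by blast
    moreover have "char_matrix S' 1 *\<^sub>v 0\<^sub>v n = 0\<^sub>v n"
      using C by (intro eq_vecI) (auto simp: scalar_prod_def)
    ultimately have "char_matrix S' 1 ^\<^sub>m 2 *\<^sub>v ones = 0\<^sub>v n"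
      by (simp add: numeral_2_eq_2 assoc_mult_mat_vec[OF C C] ones_def)
    then show ?thesis
      using mat_kernelI[OF C2, of ones] by (simp add: ones_def)
  qed
  have "\<exists>c. x = c \<cdot>\<^sub>v ones" if x: "x \<in> mat_kernel (char_matrix S' 1 ^\<^sub>m 2)" for x
  proof -
    obtain c where "x = vec n (\<lambda>_. c)"
      using row_stochastic_gen_eigenvectors_constant[OF S] fixed_const x
      unfolding S'_def by blast
    then show ?thesis
      by (auto simp: ones_def vec_eq_iff)
  qed
  then show ?thesis
    unfolding dim_gen_eigenspace_def by (rule kernel_dim_le_1[OF C2 ones_kernel])
qed

lemma simple_eigenvalue_1_if_peripheral_eigenvectors_constant:
  fixes S :: "real mat"
  defines "S' \<equiv> map_mat complex_of_real S"
  assumes S: "S \<in> carrier_mat n n" "0 < n" "row_stochastic S"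
    and peripheral: "peripheral_eigenvectors_constant S"
  shows "eigenvalue S' 1 \<and> alg_mult S' 1 = 1 \<and> (\<forall>z. eigenvalue S' z \<and> z \<noteq> 1 \<longrightarrow> cmod z < 1)"
proof -
  have S': "S' \<in> carrier_mat n n"
    using S by (simp add: S'_def)
  have peripheral': "z = 1 \<and> (\<exists>c. v = vec n (\<lambda>_. c))" if "eigenvector S' v z" "1 \<le> cmod z" for v z
    using peripheral that S(1) unfolding peripheral_eigenvectors_constant_def S'_def by auto
  have ev1: "eigenvalue S' 1"
    using row_stochastic_eigenvector_ones[OF S] unfolding eigenvalue_def S'_def by blast
  have "dim_gen_eigenspace S' 1 2 \<le> 1"
    using row_stochastic_dim_gen_eigenspace_le_1[OF S] peripheral'[of _ 1] unfolding S'_def by simp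
  then have "alg_mult S' 1 = 1"
    using alg_mult_le_1[OF S'] alg_mult_pos_if_eigenvalue[OF S' ev1] by fastforce
  moreover have "cmod z < 1" if "eigenvalue S' z" and "z \<noteq> 1" for z
    using that peripheral' unfolding eigenvalue_def by (meson not_le)
  ultimately show ?thesis
    using ev1 by blast
qed

lemma card_inter_nonempty_if_gt_half:
  assumes "X \<subseteq> {..<n}" and "Y \<subseteq> {..<n}"
    and "real n / 2 < real (card X)" and "real n / 2 < real (card Y)"
  shows "X \<inter> Y \<noteq> {}"
proof
  assume "X \<inter> Y = {}"
  then have "card X + card Y = card (X \<union> Y)"
    using assms(1,2) by (simp add: card_Un_disjoint finite_subset)
  also have "\<dots> \<le> n"
    using assms(1,2) card_mono[of "{..<n}" "X \<union> Y"] by simp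
  finally show False
    using assms(3,4) by linarith
qed

lemma sde_plus_add_minus:
  "sde_plus A + sde_minus A = mat (dim_row A) (dim_col A) (\<lambda>(i,j). sde_w A i * \<bar>A $$ (i,j)\<bar>)"
proof -
  have "0 \<le> sde_w A i" for i
    by (simp add: sde_w_def sum_nonneg)
  moreover have "max t 0 + max (- t) 0 = \<bar>t\<bar>" for t :: real
    by (simp add: max_def abs_if)
  ultimately show ?thesis
    by (intro eq_matI) (auto simp: sde_plus_def sde_minus_def sde_tilde_def abs_mult)
qed

lemma row_stochastic_sde_plus_add_minus:
  assumes "\<forall>i<dim_row A. \<exists>j<dim_col A. A $$ (i,j) \<noteq> 0"
  shows "row_stochastic (sde_plus A + sde_minus A)"
proof -
  have "(\<Sum>j<dim_col A. sde_w A i * \<bar>A $$ (i,j)\<bar>) = 1" if i: "i < dim_row A" for i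
  proof -
    obtain j where "j < dim_col A" "A $$ (i,j) \<noteq> 0"
      using assms i by blast
    then have "0 < (\<Sum>j<dim_col A. \<bar>A $$ (i,j)\<bar>)"
      by (intro sum_pos2) auto
    then show ?thesis
      by (simp add: sde_w_def sum_distrib_left[symmetric])
  qed
  moreover have "0 \<le> sde_w A i" for i
    by (simp add: sde_w_def sum_nonneg)
  ultimately show ?thesis
    by (simp add: sde_plus_add_minus row_stochastic_def)
qed

lemma sde_plus_add_minus_square_pos:
  assumes A: "A \<in> carrier_mat n n"
    and rows: "\<forall>i<n. \<exists>j<n. A $$ (i,j) \<noteq> 0"
    and row_dense: "\<forall>i<n. real (card {j. j < n \<and> A $$ (i,j) \<noteq> 0}) > real n / 2"
    and col_dense: "\<forall>i<n. real (card {j. j < n \<and> A $$ (j,i) \<noteq> 0}) > real n / 2"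
    and i: "i < n" and j: "j < n"
  shows "0 < ((sde_plus A + sde_minus A) * (sde_plus A + sde_minus A)) $$ (i,j)"
proof -
  let ?B = "sde_plus A + sde_minus A"
  have B: "?B = mat n n (\<lambda>(i,j). sde_w A i * \<bar>A $$ (i,j)\<bar>)"
    using A by (simp add: sde_plus_add_minus)
  have w_pos: "0 < sde_w A k" if k: "k < n" for k
  proof -
    obtain l where "l < n" "A $$ (k,l) \<noteq> 0"
      using rows k by blast
    then have "0 < (\<Sum>l<n. \<bar>A $$ (k,l)\<bar>)"
      by (intro sum_pos2) auto
    then show ?thesis
      using A by (simp add: sde_w_def)
  qed
  obtain k where k: "k < n" "A $$ (i,k) \<noteq> 0" "A $$ (k,j) \<noteq> 0"
    using card_inter_nonempty_if_gt_half[of "{k. k < n \<and> A $$ (i,k) \<noteq> 0}" n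
        "{k. k < n \<and> A $$ (k,j) \<noteq> 0}"] row_dense col_dense i j
    by auto
  have "(?B * ?B) $$ (i,j) = (\<Sum>l<n. (sde_w A i * \<bar>A $$ (i,l)\<bar>) * (sde_w A l * \<bar>A $$ (l,j)\<bar>))"
    using i j by (simp add: B scalar_prod_def lessThan_atLeast0)
  also have "\<dots> > 0"
    using i k w_pos by (intro sum_pos2[of _ k]) (auto intro!: mult_pos_pos mult_nonneg_nonneg less_imp_le[OF w_pos])
  finally show ?thesis .
qed

theorem proposition3:
  fixes A :: "real mat" and n :: nat
  assumes "A \<in> carrier_mat n n"
    and "n > 0"
    and "\<forall>i<n. \<exists>j<n. A $$ (i,j) \<noteq> 0"
    and "\<forall>i<n. real (card {j. j < n \<and> A $$ (i,j) \<noteq> 0}) > real n / 2"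
    and "\<forall>i<n. real (card {j. j < n \<and> A $$ (j,i) \<noteq> 0}) > real n / 2"
  shows "eigenvalue (map_mat complex_of_real (A_sde A)) 1
      \<and> alg_mult (map_mat complex_of_real (A_sde A)) 1 = 1
      \<and> (\<forall>z. eigenvalue (map_mat complex_of_real (A_sde A)) z \<and> z \<noteq> 1 \<longrightarrow> cmod z < 1)"
proof -
  let ?B = "sde_plus A + sde_minus A"
  have P: "sde_plus A \<in> carrier_mat n n" and Q: "sde_minus A \<in> carrier_mat n n"
    using assms(1) by (auto simp: sde_plus_def sde_minus_def)
  have B_stochastic: "row_stochastic ?B"
    using assms(1,3) by (intro row_stochastic_sde_plus_add_minus) auto
  have "peripheral_eigenvectors_constant ?B"
    using B_stochastic Q sde_plus_add_minus_square_pos[OF assms(1,3-5)]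
    by (intro primitive_stochastic_peripheral_eigenvectors_constant[of _ n]) auto
  then have "peripheral_eigenvectors_constant (A_sde A)"
    unfolding A_sde_def by (rule twin_block_peripheral_eigenvectors_constant[OF P Q])
  moreover have "row_stochastic (A_sde A)"
    unfolding A_sde_def using B_stochastic assms(1)
    by (intro twin_block_row_stochastic[OF P Q]) (auto simp: sde_plus_def sde_minus_def)
  moreover have "A_sde A \<in> carrier_mat (n + n) (n + n)"
    using P Q by (simp add: A_sde_def)
  ultimately show ?thesis
    using simple_eigenvalue_1_if_peripheral_eigenvectors_constant assms(2) by simp
qed

end
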